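(* Let $(X,d)$ be a separable complete metric space, let $(\Omega,\mathsf{F},\mathbb{P})$ be a probability space with a filtration $(\mathsf{F}_n)_{n\in\mathbb{N}}$, and let $F:X\to[0,\infty]$ be measurable such that $\mathrm{zer}F:=\{z\in X\mid F(z)=0\}$ is closed and non-empty. Let $\phi:X\times X\to[0,\infty)$ be a Carath\'eodory distance which is uniformly consistent with a modulus $\theta:[0,\infty)\to[0,\infty)$ that is nondecreasing and convex with $\theta(0)=0$ and $\theta(\varepsilon)>0$ for $\varepsilon>0$. Let $(x_n)$ be an $X$-valued stochastic process adapted to $(\mathsf{F}_n)$ such that: (1) $(x_n)$ is strongly stochastically $\phi$-quasi-Fej\'er monotone w.r.t.\ $\mathrm{zer}F$ and $(\mathsf{F}_n)$ with error sequences $(\zeta_n),(\xi_n)\in\ell^1_+(\mathsf{F}_n)$, where $K>0$ satisfies $\prod_{n=0}^\infty(1+\zeta_n)<K$ almost surely, and $\chi:(0,\infty)\to\mathbb{N}$ satisfies $\sum_{n=\chi(\varepsilon)}^\infty\mathbb{E}[\xi_n]<\varepsilon$ for all $\varepsilon>0$; (2) $\varphi:(0,\infty)\times\mathbb{N}\to(0,\infty)$ is a $\liminf$-bound in mean for $(x_n)$ w.r.t.\ $F$, i.e.\ for all $\varepsilon>0$ and $N\in\mathbb{N}$ there exists $n\in\mathbb{N}$ with $N\le n\le\varphi(\varepsilon,N)$ and $\mathbb{E}[F(x_n)]<\varepsilon$. Finally, let $D$ be a collection of $X$-valued random variables with $x_n\in D$ for all $n$, and let $\tau:(0,\infty)\to(0,\infty)$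 be a modulus of $\phi$-regularity for $F$ in mean w.r.t.\ $D$. Then there is a $\mathrm{zer}F$-valued random variable $x$ such that $d(x_n,x)\to0$ in mean and almost surely, with rates \[\forall\varepsilon>0\ \forall n\ge\rho(\theta(\varepsilon/2))\ \big(\mathbb{E}[d(x_n,x)]<\varepsilon\big)\] and \[\forall\lambda,\varepsilon>0\ \big(\mathbb{P}(\exists n\ge\rho(\lambda\theta(\varepsilon/2))\,(d(x_n,x)\ge\varepsilon))<\lambda\big),\] where $\rho(\varepsilon):=\varphi\big(\tau(\varepsilon/3K),\chi(\varepsilon/3K)\big)$.
   Context: $X$ carries its Borel $\sigma$-algebra. A Carath\'eodory distance is a function $\phi:X\times X\to[0,\infty)$ that is continuous in its left argument and Borel measurable in its right argument. For non-empty $S\subseteq X$, $\mathrm{dist}^\phi_S(x):=\inf_{s\in S}\phi(s,x)$. $\phi$ is uniformly consistent with modulus $\theta$ if for all $\varepsilon>0$ and $x,y\in X$, $\phi(x,y)<\theta(\varepsilon)$ implies $d(x,y)<\varepsilon$. $\ell^1_+(\mathsf{F}_n)$ denotes the set of sequences $(\xi_n)$ of nonnegative random variables with $\xi_n$ $\mathsf{F}_n$-measurable and $\sum_n\xi_n<\infty$ a.s. A process $(x_n)$ adapted to $(\mathsf{F}_n)$ is strongly stochastically $\phi$-quasi-Fej\'er monotone w.r.t.\ $S\subseteq X$ and $(\mathsf{F}_n)$ with error sequences $(\zeta_n),(\xi_n)\in\ell^1_+(\mathsf{F}_n)$ if $\mathbb{E}[\phi(z,x_{n+1})\mid\mathsf{F}_n]\le(1+\zeta_n)\phi(z,x_n)+\xi_n$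 a.s.\ for all $n\in\mathbb{N}$ and all $X$-valued $\mathsf{F}_n$-measurable random variables $z$ with $z\in S$ a.s.\ and $\mathbb{E}[\phi(z,x_n)]<\infty$. A modulus of $\phi$-regularity for $F$ in mean w.r.t.\ $D$ is a function $\tau:(0,\infty)\to(0,\infty)$ such that for all $\varepsilon>0$ and all $x\in D$: $\mathbb{E}[F(x)]<\tau(\varepsilon)$ implies $\mathbb{E}[\mathrm{dist}^\phi_{\mathrm{zer}F}(x)]<\varepsilon$. *)

theory Defs
  imports "HOL-Probability.Probability"
begin

definition phi_dist :: "('a \<Rightarrow> 'a \<Rightarrow> real) \<Rightarrow> 'a set \<Rightarrow> 'a \<Rightarrow> real" where
  "phi_dist \<phi> S x = (INF s\<in>S. \<phi> s x)"

end

theory Submission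
  imports Defs
begin

text \<open>
  Fix \<open>\<epsilon> > 0\<close>. The liminf bound and the modulus of regularity give a time \<open>n0 \<le> rate \<epsilon>\<close> at which
  \<open>x n0\<close> is, in mean, \<open>\<phi>\<close>-close to the zero set; selecting measurably from a dense sequence of
  zeros turns this into a random zero \<open>z\<close>, known at time \<open>n0\<close>, with \<open>E \<phi>(z, x n0)\<close> small.
  Divided by the partial products of \<open>1 + \<zeta>\<close>, the process \<open>\<phi>(z, x n)\<close> becomes an almost
  supermartingale with summable drift \<open>E \<xi> n\<close>, so a Ville-type maximal inequality controls
  \<open>E \<phi>(z, x m)\<close> and \<open>P(\<exists>m \<ge> n0. \<phi>(z, x m) \<ge> c)\<close> uniformly in \<open>m \<ge> n0\<close>. Through the modulus
  \<open>\<theta>\<close> the process then stays \<open>\<epsilon>\<close>-close to \<open>z\<close> after \<open>n0\<close> outside an event of small probability;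
  hence \<open>(x n)\<close> is almost surely Cauchy with limit in the closed zero set, and Jensen's inequality
  for the convex \<open>\<theta>\<close> together with Fatou's lemma carries the mean bounds over to the limit.
\<close>

lemma dense_sequence:
  fixes S :: "'a::{metric_space, second_countable_topology} set"
  assumes "S \<noteq> {}"
  obtains e :: "nat \<Rightarrow> 'a" where "range e \<subseteq> S" "S \<subseteq> closure (range e)"
proof -
  obtain T where T: "countable T" "T \<subseteq> S" "S \<subseteq> closure T"
    using separable[of S] by blast
  with assms have "T \<noteq> {}" by auto
  with T show ?thesis using that[of "from_nat_into T"] by simp
qed

lemma phi_dist_eq_INF_dense:
  assumes cont: "continuous_on UNIV (\<lambda>a. \<phi> a y)" and nonneg: "\<And>a. 0 \<le> \<phi> a y"
    and e: "range e \<subseteq> S" "S \<subseteq> closure (range e)"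
  shows "phi_dist \<phi> S y = (INF k. \<phi> (e k) y)"
proof (rule antisym)
  have bdd: "bdd_below ((\<lambda>a. \<phi> a y) ` A)" for A by (rule bdd_belowI[of _ 0]) (auto simp: nonneg)
  show "phi_dist \<phi> S y \<le> (INF k. \<phi> (e k) y)"
    unfolding phi_dist_def using e(1) by (intro cINF_greatest cINF_lower bdd) auto
  have "(\<lambda>a. \<phi> a y) ` closure (range e) \<subseteq> {(INF k. \<phi> (e k) y)..}"
    by (rule image_closure_subset)
       (auto intro: continuous_on_subset[OF cont] intro!: cINF_lower bdd_belowI[of _ 0] simp: nonneg)
  with e(2) have "(INF k. \<phi> (e k) y) \<le> \<phi> s y" if "s \<in> S" for s
    using that by auto
  then show "(INF k. \<phi> (e k) y) \<le> phi_dist \<phi> S y"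
    unfolding phi_dist_def using e(1) by (intro cINF_greatest) auto
qed

lemma (in prob_space) measurable_near_minimiser:
  fixes g :: "nat \<Rightarrow> 'a \<Rightarrow> real"
  assumes N: "subalgebra M N"
    and g_meas[measurable]: "\<And>k. g k \<in> borel_measurable N" and g_nonneg: "\<And>k \<omega>. 0 \<le> g k \<omega>"
    and small: "(\<integral>\<^sup>+\<omega>. ennreal (INF k. g k \<omega>) \<partial>M) < ennreal \<delta>"
  obtains J where "J \<in> measurable N (count_space UNIV)"
    "(\<integral>\<^sup>+\<omega>. ennreal (g (J \<omega>) \<omega>) \<partial>M) < ennreal \<delta>"
proof -
  let ?m = "\<lambda>\<omega>. INF k. g k \<omega>"
  have bdd: "bdd_below (range (\<lambda>k. g k \<omega>))" for \<omega>
    by (rule bdd_belowI[of _ 0]) (auto simp: g_nonneg)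
  have m_nonneg: "0 \<le> ?m \<omega>" for \<omega>
    by (rule cINF_greatest) (auto simp: g_nonneg)
  have "?m \<in> borel_measurable N" by measurable
  then have [measurable]: "?m \<in> borel_measurable M" by (rule measurable_from_subalg[OF N])
  obtain r where r: "(\<integral>\<^sup>+\<omega>. ennreal (?m \<omega>) \<partial>M) = ennreal r" "0 \<le> r" "r < \<delta>"
    using small by (cases "\<integral>\<^sup>+\<omega>. ennreal (?m \<omega>) \<partial>M") (auto simp: ennreal_less_iff)
  define \<eta> where "\<eta> = (\<delta> - r) / 2"
  have \<eta>: "0 < \<eta>" "r + \<eta> < \<delta>" using r(3) unfolding \<eta>_def by (simp_all add: field_simps)
  define J where "J \<omega> = (LEAST k. g k \<omega> < ?m \<omega> + \<eta>)" for \<omega>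
  have J_meas: "J \<in> measurable N (count_space UNIV)" unfolding J_def by measurable
  have J_le: "g (J \<omega>) \<omega> \<le> ?m \<omega> + \<eta>" for \<omega>
  proof -
    have "\<exists>k. g k \<omega> < ?m \<omega> + \<eta>"
      using \<eta>(1) cINF_less_iff[OF UNIV_not_empty bdd, of \<omega> "?m \<omega> + \<eta>"] by simp
    then show ?thesis unfolding J_def by (rule LeastI2_ex) simp
  qed
  have "(\<integral>\<^sup>+\<omega>. ennreal (g (J \<omega>) \<omega>) \<partial>M) \<le> (\<integral>\<^sup>+\<omega>. ennreal (?m \<omega>) + ennreal \<eta> \<partial>M)"
  proof (rule nn_integral_mono)
    fix \<omega>
    have "ennreal (g (J \<omega>) \<omega>) \<le> ennreal (?m \<omega> + \<eta>)" using J_le by (rule ennreal_leI)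
    then show "ennreal (g (J \<omega>) \<omega>) \<le> ennreal (?m \<omega>) + ennreal \<eta>"
      using m_nonneg \<eta>(1) by (simp add: ennreal_plus)
  qed
  also have "\<dots> = ennreal (r + \<eta>)"
    using r \<eta>(1) by (subst nn_integral_add) (auto simp: emeasure_space_1 ennreal_plus)
  also have "\<dots> < ennreal \<delta>" using \<eta> r(2) by (intro ennreal_lessI) auto
  finally show ?thesis using that J_meas by blast
qed

lemma prod_one_plus_le_prodinf:
  fixes a :: "nat \<Rightarrow> real"
  assumes "\<And>n. 0 \<le> a n" "summable a"
  shows "(\<Prod>j<k. 1 + a j) \<le> (\<Prod>j. 1 + a j)"
proof -
  have "summable (\<lambda>j. norm ((1 + a j) - 1))" using assms by simp
  then have "convergent_prod (\<lambda>j. 1 + a j)"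
    by (intro abs_convergent_prod_imp_convergent_prod summable_imp_abs_convergent_prod)
  then show ?thesis
    by (intro prod_le_prodinf[OF convergent_prod_has_prod]) (simp_all add: assms(1) add_nonneg_nonneg)
qed

lemma ennreal_suminf_tail_mono:
  fixes f :: "nat \<Rightarrow> ennreal"
  assumes "m \<le> n"
  shows "(\<Sum>j. f (j + n)) \<le> (\<Sum>j. f (j + m))"
proof -
  obtain t where n: "n = t + m" using assms le_iff_add by (metis add.commute)
  have "(\<Sum>j. f (j + n)) \<le> (\<Sum>j. f (j + n)) + (\<Sum>j<t. f (j + m))"
    by (rule add_increasing2) simp_all
  also have "\<dots> = (\<Sum>j. f (j + m))"
    unfolding n using suminf_offset[where f = "\<lambda>j. f (j + m)" and i = t]
    by (simp add: add.assoc)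
  finally show ?thesis .
qed

lemma ennreal_LIMSEQ_zero_of_rate:
  fixes a :: "nat \<Rightarrow> ennreal" and r :: "real \<Rightarrow> real"
  assumes "\<And>\<epsilon> n. 0 < \<epsilon> \<Longrightarrow> r \<epsilon> \<le> real n \<Longrightarrow> a n < ennreal \<epsilon>"
  shows "a \<longlonglongrightarrow> 0"
proof (rule order_tendstoI)
  fix b :: ennreal assume "0 < b"
  have "\<exists>\<epsilon>>0. ennreal \<epsilon> \<le> b"
  proof (cases b)
    case (real r)
    with \<open>0 < b\<close> show ?thesis by (intro exI[of _ r]) auto
  qed (auto intro: exI[of _ 1])
  then obtain \<epsilon> where \<epsilon>: "0 < \<epsilon>" "ennreal \<epsilon> \<le> b" by blast
  have "a n < b" if "nat \<lceil>r \<epsilon>\<rceil> \<le> n" for n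
    using assms[OF \<epsilon>(1), of n] that \<epsilon>(2) by (auto intro: less_le_trans)
  then show "\<forall>\<^sub>F n in sequentially. a n < b" unfolding eventually_sequentially by blast
qed simp

lemma (in finite_measure) AE_I_small_exceptional_sets:
  assumes "\<And>l. 0 < l \<Longrightarrow> \<exists>E\<in>sets M. measure M E \<le> l \<and> {\<omega> \<in> space M. \<not> P \<omega>} \<subseteq> E"
  shows "AE \<omega> in M. P \<omega>"
proof -
  have "\<forall>k::nat. \<exists>E. E \<in> sets M \<and> measure M E \<le> inverse (Suc k) \<and> {\<omega> \<in> space M. \<not> P \<omega>} \<subseteq> E"
  proof
    fix k :: nat
    have "0 < inverse (real (Suc k))" by simp
    from assms[OF this] show "\<exists>E. E \<in> sets M \<and> measure M E \<le> inverse (Suc k) \<and> {\<omega> \<in> space M. \<not> P \<omega>} \<subseteq> E"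
      by blast
  qed
  then obtain E where E: "\<And>k. E k \<in> sets M" "\<And>k. measure M (E k) \<le> inverse (Suc k)"
    "\<And>k. {\<omega> \<in> space M. \<not> P \<omega>} \<subseteq> E k"
    using choice[of "\<lambda>k E. E \<in> sets M \<and> measure M E \<le> inverse (Suc k) \<and> {\<omega> \<in> space M. \<not> P \<omega>} \<subseteq> E"]
    by blast
  have N: "(\<Inter>k. E k) \<in> sets M" using E(1) by auto
  have small: "measure M (\<Inter>k. E k) \<le> \<epsilon>" if \<epsilon>: "0 < \<epsilon>" for \<epsilon>
  proof -
    obtain k where k: "inverse (Suc k) < \<epsilon>" using reals_Archimedean[OF \<epsilon>] by blast
    have "measure M (\<Inter>k. E k) \<le> measure M (E k)"
      using E(1)[of k] by (intro finite_measure_mono) blast+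
    with E(2)[of k] k show ?thesis by linarith
  qed
  have "measure M (\<Inter>k. E k) \<le> 0"
    by (rule field_le_epsilon) (use small in simp)
  then have "measure M (\<Inter>k. E k) = 0"
    using measure_nonneg[of M "\<Inter>k. E k"] by linarith
  then have "(\<Inter>k. E k) \<in> null_sets M"
    using N by (intro null_setsI) (simp add: emeasure_eq_measure)
  moreover have "{\<omega> \<in> space M. \<not> P \<omega>} \<subseteq> (\<Inter>k. E k)" using E(3) by blast
  ultimately show ?thesis by (rule AE_I')
qed

lemma convex_modulus_ge_linear:
  fixes \<theta> :: "real \<Rightarrow> real"
  assumes "convex_on {0..} \<theta>" "\<theta> 0 = 0" "1 \<le> t"
  shows "t * \<theta> 1 \<le> \<theta> t"
proof -
  have "\<theta> ((1 - 1 / t) *\<^sub>R 0 + (1 / t) *\<^sub>R t) \<le> (1 - 1 / t) * \<theta> 0 + (1 / t) * \<theta> t"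
    using assms by (intro convex_onD[OF assms(1)]) auto
  with assms show ?thesis by (simp add: field_simps)
qed

lemma convex_on_max_zero:
  fixes \<theta> :: "real \<Rightarrow> real"
  assumes convex: "convex_on {0..} \<theta>" and mono: "mono_on {0..} \<theta>"
  shows "convex_on UNIV (\<lambda>t. \<theta> (max t 0))"
proof (rule convex_onI)
  fix t u v :: real assume t: "0 < t" "t < 1"
  have "(1 - t) * u \<le> (1 - t) * max u 0" "t * v \<le> t * max v 0"
    using t by (simp_all add: mult_left_mono)
  moreover have "0 \<le> (1 - t) * max u 0 + t * max v 0"
    using t by (intro add_nonneg_nonneg mult_nonneg_nonneg) auto
  ultimately have "max ((1 - t) * u + t * v) 0 \<le> (1 - t) * max u 0 + t * max v 0"
    by simp
  with \<open>0 \<le> (1 - t) * max u 0 + t * max v 0\<close>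
  have "\<theta> (max ((1 - t) *\<^sub>R u + t *\<^sub>R v) 0) \<le> \<theta> ((1 - t) *\<^sub>R max u 0 + t *\<^sub>R max v 0)"
    by (intro mono_onD[OF mono]) simp_all
  also have "\<dots> \<le> (1 - t) * \<theta> (max u 0) + t * \<theta> (max v 0)"
    using t by (intro convex_onD[OF convex]) simp_all
  finally show "\<theta> (max ((1 - t) *\<^sub>R u + t *\<^sub>R v) 0) \<le> (1 - t) * \<theta> (max u 0) + t * \<theta> (max v 0)" .
qed simp

lemma (in finite_measure) integrable_of_convex_modulus:
  fixes \<theta> :: "real \<Rightarrow> real" and f :: "'a \<Rightarrow> real"
  assumes \<theta>: "convex_on {0..} \<theta>" "mono_on {0..} \<theta>" "\<theta> 0 = 0" "0 < \<theta> 1"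
    and f: "f \<in> borel_measurable M" "\<And>\<omega>. \<omega> \<in> space M \<Longrightarrow> 0 \<le> f \<omega>"
    and int: "integrable M (\<lambda>\<omega>. \<theta> (f \<omega>))"
  shows "integrable M f"
proof (rule Bochner_Integration.integrable_bound)
  show "integrable M (\<lambda>\<omega>. 1 + \<theta> (f \<omega>) / \<theta> 1)" using int by auto
  show "AE \<omega> in M. norm (f \<omega>) \<le> norm (1 + \<theta> (f \<omega>) / \<theta> 1)"
  proof (rule AE_I2)
    fix \<omega> assume \<omega>: "\<omega> \<in> space M"
    have "0 \<le> \<theta> (f \<omega>)" using mono_onD[OF \<theta>(2), of 0 "f \<omega>"] f(2)[OF \<omega>] \<theta>(3) by simp
    then have "0 \<le> \<theta> (f \<omega>) / \<theta> 1" using \<theta>(4) by simp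
    moreover have "f \<omega> \<le> 1 + \<theta> (f \<omega>) / \<theta> 1"
    proof (cases "f \<omega> \<le> 1")
      case False
      then have "f \<omega> * \<theta> 1 \<le> \<theta> (f \<omega>)"
        by (intro convex_modulus_ge_linear[OF \<theta>(1,3)]) simp
      with \<theta>(4) have "f \<omega> \<le> \<theta> (f \<omega>) / \<theta> 1" by (simp add: field_simps)
      then show ?thesis by linarith
    qed (use \<open>0 \<le> \<theta> (f \<omega>) / \<theta> 1\<close> in linarith)
    ultimately show "norm (f \<omega>) \<le> norm (1 + \<theta> (f \<omega>) / \<theta> 1)" using f(2)[OF \<omega>] by simp
  qed
qed (use f(1) in simp)

lemma (in prob_space) nn_integral_less_by_convex_modulus:
  fixes \<theta> :: "real \<Rightarrow> real" and f :: "'a \<Rightarrow> real"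
  assumes \<theta>: "convex_on {0..} \<theta>" "mono_on {0..} \<theta>" "\<theta> 0 = 0" "0 < \<theta> 1"
    and f: "f \<in> borel_measurable M" "\<And>\<omega>. \<omega> \<in> space M \<Longrightarrow> 0 \<le> f \<omega>"
    and bound: "(\<integral>\<^sup>+\<omega>. ennreal (\<theta> (f \<omega>)) \<partial>M) \<le> ennreal q" "0 \<le> q" "q < \<theta> a" "0 \<le> a"
  shows "(\<integral>\<^sup>+\<omega>. ennreal (f \<omega>) \<partial>M) < ennreal a"
proof -
  let ?\<theta> = "\<lambda>t. \<theta> (max t 0)"
  have \<theta>_nonneg: "0 \<le> \<theta> t" if "0 \<le> t" for t
    using mono_onD[OF \<theta>(2), of 0 t] that \<theta>(3) by simp
  have \<theta>_convex: "convex_on UNIV ?\<theta>" by (rule convex_on_max_zero[OF \<theta>(1,2)])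
  have [measurable]: "?\<theta> \<in> borel_measurable borel"
    by (intro borel_measurable_continuous_onI convex_on_continuous[OF open_UNIV \<theta>_convex])
  have \<theta>f_eq: "?\<theta> (f \<omega>) = \<theta> (f \<omega>)" if "\<omega> \<in> space M" for \<omega>
    using f(2)[OF that] by simp
  have \<theta>f_nn_integral: "(\<integral>\<^sup>+\<omega>. ennreal (?\<theta> (f \<omega>)) \<partial>M) = (\<integral>\<^sup>+\<omega>. ennreal (\<theta> (f \<omega>)) \<partial>M)"
    by (rule nn_integral_cong) (simp add: \<theta>f_eq)
  have \<theta>f_int: "integrable M (\<lambda>\<omega>. ?\<theta> (f \<omega>))"
  proof (rule integrableI_nonneg)
    show "(\<integral>\<^sup>+\<omega>. ennreal (?\<theta> (f \<omega>)) \<partial>M) < \<infinity>"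
      using bound(1) unfolding \<theta>f_nn_integral by (simp add: le_less_trans)
  qed (use f(1) \<theta>_nonneg in auto)
  have "integrable M (\<lambda>\<omega>. \<theta> (f \<omega>))"
    by (rule Bochner_Integration.integrable_cong[THEN iffD1, OF refl _ \<theta>f_int]) (rule \<theta>f_eq)
  note f_int = integrable_of_convex_modulus[OF \<theta> f this]
  have "?\<theta> (expectation f) \<le> expectation (\<lambda>\<omega>. ?\<theta> (f \<omega>))"
    by (rule jensens_inequality[where I = UNIV]) (use f_int \<theta>f_int \<theta>_convex in auto)
  also have "\<dots> \<le> q"
  proof -
    have "ennreal (expectation (\<lambda>\<omega>. ?\<theta> (f \<omega>))) = (\<integral>\<^sup>+\<omega>. ennreal (\<theta> (f \<omega>)) \<partial>M)"
      unfolding \<theta>f_nn_integral[symmetric]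
      by (rule nn_integral_eq_integral[OF \<theta>f_int, symmetric]) (simp add: \<theta>_nonneg)
    with bound(1) have "ennreal (expectation (\<lambda>\<omega>. ?\<theta> (f \<omega>))) \<le> ennreal q" by simp
    moreover have "0 \<le> expectation (\<lambda>\<omega>. ?\<theta> (f \<omega>))" by (simp add: \<theta>_nonneg)
    ultimately show ?thesis using bound(2) by simp
  qed
  finally have "\<theta> (expectation f) < \<theta> a"
    using bound(3) by (simp add: f(2))
  then have "expectation f < a"
    using mono_onD[OF \<theta>(2), of a "expectation f"] bound(4) by (auto simp: not_less[symmetric])
  moreover have "(\<integral>\<^sup>+\<omega>. ennreal (f \<omega>) \<partial>M) = ennreal (expectation f)"
    using f_int f(2) by (intro nn_integral_eq_integral) auto
  ultimately show ?thesis
    using Bochner_Integration.integral_nonneg[of M f] f(2) by (simp add: ennreal_less_iff)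
qed

lemma convex_on_gap_below:
  fixes \<theta> :: "real \<Rightarrow> real"
  assumes "convex_on {0..} \<theta>" "0 < b" "q < \<theta> b"
  obtains a where "0 < a" "a < b" "q < \<theta> a"
proof -
  have "convex_on {0<..} \<theta>" by (rule convex_on_subset[OF assms(1)]) auto
  then have "continuous_on {0<..} \<theta>" by (rule convex_on_continuous[OF open_greaterThan])
  then have "isCont \<theta> b" using assms(2) by (simp add: continuous_on_eq_continuous_at)
  then have "(\<theta> \<longlongrightarrow> \<theta> b) (at_left b)"
    unfolding isCont_def by (rule tendsto_mono[OF at_le[OF subset_UNIV]])
  then have "\<forall>\<^sub>F a in at_left b. q < \<theta> a" using assms(3) by (rule order_tendstoD)
  moreover have "\<forall>\<^sub>F a in at_left b. a \<in> {0<..<b}" using assms(2) by (rule eventually_at_left_real)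
  ultimately have "\<forall>\<^sub>F a in at_left b. q < \<theta> a \<and> a \<in> {0<..<b}" by (rule eventually_conj)
  then obtain a where "q < \<theta> a" "a \<in> {0<..<b}"
    using eventually_happens'[OF trivial_limit_at_left_real] by blast
  then show ?thesis by (intro that) auto
qed

lemma convergent_if_eventually_near:
  fixes f :: "nat \<Rightarrow> 'a::complete_space"
  assumes near: "\<And>\<epsilon>. 0 < \<epsilon> \<Longrightarrow> \<exists>s\<in>S. \<forall>\<^sub>F n in sequentially. dist s (f n) < \<epsilon>"
  shows "convergent f" "lim f \<in> closure S"
proof -
  have "Cauchy f"
  proof (rule metric_CauchyI)
    fix \<epsilon> :: real assume "0 < \<epsilon>"
    then obtain s N where N: "\<And>n. N \<le> n \<Longrightarrow> dist s (f n) < \<epsilon> / 2"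
      using near[of "\<epsilon> / 2"] unfolding eventually_sequentially by auto
    then have "dist (f m) (f n) < \<epsilon>" if "N \<le> m" "N \<le> n" for m n
      using N[OF that(1)] N[OF that(2)] dist_triangle3[of "f m" "f n" s] by linarith
    then show "\<exists>N. \<forall>m\<ge>N. \<forall>n\<ge>N. dist (f m) (f n) < \<epsilon>" by blast
  qed
  then show "convergent f" by (rule Cauchy_convergent)
  then have lim: "f \<longlonglongrightarrow> lim f" by (rule convergent_LIMSEQ_iff[THEN iffD1])
  show "lim f \<in> closure S"
    unfolding closure_approachable
  proof (intro allI impI)
    fix \<epsilon> :: real assume "0 < \<epsilon>"
    then obtain s where s: "s \<in> S" "\<forall>\<^sub>F n in sequentially. dist s (f n) < \<epsilon> / 2"
      using near[of "\<epsilon> / 2"] by auto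
    have "dist s (lim f) \<le> \<epsilon> / 2"
      using tendsto_dist[OF tendsto_const lim] eventually_mono[OF s(2) less_imp_le] sequentially_bot
      by (rule tendsto_upperbound)
    with s(1) \<open>0 < \<epsilon>\<close> show "\<exists>s\<in>S. dist s (lim f) < \<epsilon>" by force
  qed
qed

lemma measurable_limit_in_closed:
  fixes x :: "nat \<Rightarrow> 'b \<Rightarrow> 'a::polish_space"
  assumes x[measurable]: "\<And>n. x n \<in> borel_measurable M"
    and S: "closed S" "s0 \<in> S"
    and conv: "AE \<omega> in M. convergent (\<lambda>n. x n \<omega>) \<and> lim (\<lambda>n. x n \<omega>) \<in> S"
  obtains xl where "xl \<in> borel_measurable M" "\<And>\<omega>. xl \<omega> \<in> S" "AE \<omega> in M. (\<lambda>n. x n \<omega>) \<longlonglongrightarrow> xl \<omega>"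
proof -
  \<comment> \<open>\<open>lim\<close> is only meaningful on convergent sequences; replacing the others by a constant
      makes the pointwise limit exist everywhere, hence measurable.\<close>
  define y where "y n \<omega> = (if Cauchy (\<lambda>n. x n \<omega>) then x n \<omega> else s0)" for n \<omega>
  have [measurable]: "Measurable.pred M (\<lambda>\<omega>. Cauchy (\<lambda>n. x n \<omega>))"
    unfolding metric_Cauchy_iff2 by measurable
  have y_meas: "y n \<in> borel_measurable M" for n unfolding y_def by measurable
  have y_lim: "(\<lambda>n. y n \<omega>) \<longlonglongrightarrow> lim (\<lambda>n. y n \<omega>)" for \<omega>
    by (cases "Cauchy (\<lambda>n. x n \<omega>)")
       (simp_all add: y_def Cauchy_convergent_iff convergent_LIMSEQ_iff[symmetric] convergent_const)
  have [measurable]: "(\<lambda>\<omega>. lim (\<lambda>n. y n \<omega>)) \<in> borel_measurable M"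
    by (rule borel_measurable_LIMSEQ_metric[OF y_meas y_lim])
  have [measurable]: "S \<in> sets borel" using S(1) by (rule borel_closed)
  define xl where "xl \<omega> = (if lim (\<lambda>n. y n \<omega>) \<in> S then lim (\<lambda>n. y n \<omega>) else s0)" for \<omega>
  have "xl \<in> borel_measurable M" unfolding xl_def by measurable
  moreover have "xl \<omega> \<in> S" for \<omega> using S(2) by (simp add: xl_def)
  moreover have "AE \<omega> in M. (\<lambda>n. x n \<omega>) \<longlonglongrightarrow> xl \<omega>"
    using conv
  proof eventually_elim
    case (elim \<omega>)
    then have "y n \<omega> = x n \<omega>" for n by (simp add: y_def Cauchy_convergent_iff)
    with elim show ?case by (simp add: xl_def convergent_LIMSEQ_iff)
  qed
  ultimately show ?thesis using that by blast
qed

lemma nn_integral_dist_le_of_AE_tendsto: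
  fixes x :: "nat \<Rightarrow> 'b \<Rightarrow> 'a::metric_space"
  assumes [measurable]: "\<And>m. (\<lambda>\<omega>. dist (z \<omega>) (x m \<omega>)) \<in> borel_measurable M"
    and lim: "AE \<omega> in M. (\<lambda>m. x m \<omega>) \<longlonglongrightarrow> xl \<omega>"
    and bound: "\<And>m. n0 \<le> m \<Longrightarrow> (\<integral>\<^sup>+\<omega>. ennreal (dist (z \<omega>) (x m \<omega>)) \<partial>M) \<le> a"
  shows "(\<integral>\<^sup>+\<omega>. ennreal (dist (z \<omega>) (xl \<omega>)) \<partial>M) \<le> a"
proof -
  have "(\<integral>\<^sup>+\<omega>. ennreal (dist (z \<omega>) (xl \<omega>)) \<partial>M)
      = (\<integral>\<^sup>+\<omega>. liminf (\<lambda>m. ennreal (dist (z \<omega>) (x m \<omega>))) \<partial>M)"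
  proof (rule nn_integral_cong_AE)
    show "AE \<omega> in M. ennreal (dist (z \<omega>) (xl \<omega>)) = liminf (\<lambda>m. ennreal (dist (z \<omega>) (x m \<omega>)))"
      using lim
    proof eventually_elim
      case (elim \<omega>)
      then have "(\<lambda>m. ennreal (dist (z \<omega>) (x m \<omega>))) \<longlonglongrightarrow> ennreal (dist (z \<omega>) (xl \<omega>))"
        by (intro tendsto_intros)
      then show ?case by (rule lim_imp_Liminf[symmetric, rotated]) simp
    qed
  qed
  also have "\<dots> \<le> liminf (\<lambda>m. \<integral>\<^sup>+\<omega>. ennreal (dist (z \<omega>) (x m \<omega>)) \<partial>M)"
    by (rule nn_integral_liminf) measurable
  also have "\<dots> \<le> a"
    using bound by (intro Liminf_le) (auto simp: eventually_sequentially)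
  finally show ?thesis .
qed

section \<open>A maximal inequality for almost supermartingales\<close>

locale almost_supermartingale =
  fixes M :: "'b measure" and G :: "nat \<Rightarrow> 'b measure"
    and Y :: "nat \<Rightarrow> 'b \<Rightarrow> ennreal" and c :: "nat \<Rightarrow> ennreal"
  assumes subalgebra: "\<And>n. subalgebra M (G n)"
    and filtration: "\<And>m n. m \<le> n \<Longrightarrow> sets (G m) \<subseteq> sets (G n)"
    and adapted: "\<And>n. Y n \<in> borel_measurable (G n)"
    \<comment> \<open>Integrability of \<open>Y n\<close> is required because the Fejer inequality is only assumed at
        anchors of finite mean distance.\<close>
    and step: "\<And>n A. A \<in> sets (G n) \<Longrightarrow> (\<integral>\<^sup>+\<omega>. Y n \<omega> \<partial>M) < \<infinity> \<Longrightarrow>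
      (\<integral>\<^sup>+\<omega>\<in>A. Y (Suc n) \<omega> \<partial>M) \<le> (\<integral>\<^sup>+\<omega>\<in>A. Y n \<omega> \<partial>M) + c n"
begin

lemma adapted_le: "k \<le> n \<Longrightarrow> Y k \<in> borel_measurable (G n)"
  by (rule measurable_from_subalg[OF _ adapted]) (use subalgebra filtration in \<open>auto simp: subalgebra_def\<close>)

lemma measurable_Y[measurable]: "Y n \<in> borel_measurable M"
  by (rule measurable_from_subalg[OF subalgebra adapted])

lemma space_G: "space (G n) = space M"
  using subalgebra by (simp add: subalgebra_def)

lemma sets_G_subset: "A \<in> sets (G n) \<Longrightarrow> A \<in> sets M"
  using subalgebra by (auto simp: subalgebra_def)

definition hit :: "ennreal \<Rightarrow> nat \<Rightarrow> 'b set" where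
  "hit a n = {\<omega> \<in> space M. \<exists>k\<le>n. a \<le> Y k \<omega>}"

definition stopped :: "ennreal \<Rightarrow> nat \<Rightarrow> 'b \<Rightarrow> ennreal" where
  "stopped a n \<omega> = (if \<omega> \<in> hit a n then a else Y n \<omega>)"

lemma hit_sets: "hit a n \<in> sets (G n)"
proof -
  have "hit a n = (\<Union>k\<le>n. {\<omega> \<in> space (G n). a \<le> Y k \<omega>})"
    by (auto simp: hit_def space_G)
  also have "\<dots> \<in> sets (G n)"
    using adapted_le by (intro sets.finite_UN) auto
  finally show ?thesis .
qed

lemma stopped_Suc_nn_integral_le:
  assumes Y_fin: "(\<integral>\<^sup>+\<omega>. Y n \<omega> \<partial>M) < \<infinity>"
  shows "(\<integral>\<^sup>+\<omega>. stopped a (Suc n) \<omega> \<partial>M) \<le> (\<integral>\<^sup>+\<omega>. stopped a n \<omega> \<partial>M) + c n"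
proof -
  let ?B = "hit a n"
  have B: "?B \<in> sets (G n)" "space M - ?B \<in> sets (G n)"
    using hit_sets[of a n] sets.compl_sets[of ?B "G n"] by (simp_all add: space_G)
  have [measurable]: "?B \<in> sets M" "space M - ?B \<in> sets M" using B by (auto intro: sets_G_subset)
  have stopped_eq: "stopped a n \<omega> = a * indicator ?B \<omega> + Y n \<omega> * indicator (space M - ?B) \<omega>"
    if "\<omega> \<in> space M" for \<omega>
    using that by (simp add: stopped_def indicator_def)
  have stopped_Suc_le:
    "stopped a (Suc n) \<omega> \<le> a * indicator ?B \<omega> + Y (Suc n) \<omega> * indicator (space M - ?B) \<omega>"
    if \<omega>: "\<omega> \<in> space M" for \<omega>
  proof (cases "\<omega> \<in> ?B")
    case True
    then have "\<omega> \<in> hit a (Suc n)" by (auto simp: hit_def intro: le_SucI)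
    with True show ?thesis by (simp add: stopped_def)
  next
    case False
    with \<omega> have "stopped a (Suc n) \<omega> \<le> Y (Suc n) \<omega>"
      by (auto simp: stopped_def hit_def le_Suc_eq)
    with False \<omega> show ?thesis by simp
  qed
  have "(\<integral>\<^sup>+\<omega>. stopped a (Suc n) \<omega> \<partial>M)
      \<le> (\<integral>\<^sup>+\<omega>. a * indicator ?B \<omega> + Y (Suc n) \<omega> * indicator (space M - ?B) \<omega> \<partial>M)"
    by (rule nn_integral_mono) (rule stopped_Suc_le)
  also have "\<dots> = (\<integral>\<^sup>+\<omega>. a * indicator ?B \<omega> \<partial>M) + (\<integral>\<^sup>+\<omega>\<in>space M - ?B. Y (Suc n) \<omega> \<partial>M)"
    by (rule nn_integral_add) auto
  also have "\<dots> \<le> (\<integral>\<^sup>+\<omega>. a * indicator ?B \<omega> \<partial>M) + ((\<integral>\<^sup>+\<omega>\<in>space M - ?B. Y n \<omega> \<partial>M) + c n)"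
    by (intro add_left_mono step B Y_fin)
  also have "\<dots> = (\<integral>\<^sup>+\<omega>. a * indicator ?B \<omega> + Y n \<omega> * indicator (space M - ?B) \<omega> \<partial>M) + c n"
    by (subst nn_integral_add) (auto simp: add.assoc)
  also have "\<dots> = (\<integral>\<^sup>+\<omega>. stopped a n \<omega> \<partial>M) + c n"
    by (simp add: stopped_eq cong: nn_integral_cong)
  finally show ?thesis .
qed

lemma stopped_nn_integral_le:
  "(\<integral>\<^sup>+\<omega>. stopped a n \<omega> \<partial>M) \<le> (\<integral>\<^sup>+\<omega>. Y 0 \<omega> \<partial>M) + (\<Sum>j<n. c j)"
proof (induction n arbitrary: a)
  case 0
  have "stopped a 0 \<omega> \<le> Y 0 \<omega>" for \<omega> by (simp add: stopped_def hit_def)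
  then show ?case by (simp add: nn_integral_mono)
next
  case (Suc n)
  let ?R = "\<lambda>n. (\<integral>\<^sup>+\<omega>. Y 0 \<omega> \<partial>M) + (\<Sum>j<n. c j)"
  show ?case
  proof (cases "?R (Suc n) < \<infinity>")
    case False
    then have R_top: "?R (Suc n) = \<infinity>"
      by (simp add: infinity_ennreal_def less_top[symmetric])
    show ?thesis unfolding R_top by (simp add: infinity_ennreal_def)
  next
    case True
    have "(\<integral>\<^sup>+\<omega>. Y n \<omega> \<partial>M) \<le> (\<integral>\<^sup>+\<omega>. stopped \<infinity> n \<omega> \<partial>M)"
      by (intro nn_integral_mono) (simp add: stopped_def)
    also have "\<dots> \<le> ?R n" by (rule Suc.IH)
    also have "\<dots> \<le> ?R (Suc n)" by (intro add_left_mono sum_mono2) auto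
    finally have "(\<integral>\<^sup>+\<omega>. Y n \<omega> \<partial>M) < \<infinity>" using True by (rule le_less_trans)
    then have "(\<integral>\<^sup>+\<omega>. stopped a (Suc n) \<omega> \<partial>M) \<le> (\<integral>\<^sup>+\<omega>. stopped a n \<omega> \<partial>M) + c n"
      by (rule stopped_Suc_nn_integral_le)
    also have "\<dots> \<le> ?R n + c n" using Suc.IH by (rule add_right_mono)
    also have "\<dots> = ?R (Suc n)" by (simp add: add.assoc)
    finally show ?thesis .
  qed
qed

lemma nn_integral_le:
  "(\<integral>\<^sup>+\<omega>. Y n \<omega> \<partial>M) \<le> (\<integral>\<^sup>+\<omega>. Y 0 \<omega> \<partial>M) + (\<Sum>j. c j)"
proof -
  have "(\<integral>\<^sup>+\<omega>. Y n \<omega> \<partial>M) \<le> (\<integral>\<^sup>+\<omega>. stopped \<infinity> n \<omega> \<partial>M)"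
    by (intro nn_integral_mono) (simp add: stopped_def)
  also have "\<dots> \<le> (\<integral>\<^sup>+\<omega>. Y 0 \<omega> \<partial>M) + (\<Sum>j<n. c j)" by (rule stopped_nn_integral_le)
  also have "\<dots> \<le> (\<integral>\<^sup>+\<omega>. Y 0 \<omega> \<partial>M) + (\<Sum>j. c j)"
    by (intro add_left_mono sum_le_suminf) auto
  finally show ?thesis .
qed

lemma maximal_inequality:
  "a * emeasure M {\<omega> \<in> space M. \<exists>n. a \<le> Y n \<omega>} \<le> (\<integral>\<^sup>+\<omega>. Y 0 \<omega> \<partial>M) + (\<Sum>j. c j)"
proof -
  have hit_M: "hit a n \<in> sets M" for n by (rule sets_G_subset[OF hit_sets])
  have "a * emeasure M (hit a n) \<le> (\<integral>\<^sup>+\<omega>. Y 0 \<omega> \<partial>M) + (\<Sum>j. c j)" for n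
  proof -
    have "a * emeasure M (hit a n) = (\<integral>\<^sup>+\<omega>. a * indicator (hit a n) \<omega> \<partial>M)"
      using hit_M by (simp add: nn_integral_cmult_indicator)
    also have "\<dots> \<le> (\<integral>\<^sup>+\<omega>. stopped a n \<omega> \<partial>M)"
      by (intro nn_integral_mono) (simp add: stopped_def indicator_def)
    also have "\<dots> \<le> (\<integral>\<^sup>+\<omega>. Y 0 \<omega> \<partial>M) + (\<Sum>j<n. c j)" by (rule stopped_nn_integral_le)
    also have "\<dots> \<le> (\<integral>\<^sup>+\<omega>. Y 0 \<omega> \<partial>M) + (\<Sum>j. c j)"
      by (intro add_left_mono sum_le_suminf) auto
    finally show ?thesis .
  qed
  moreover have "a * emeasure M (\<Union>n. hit a n) = (SUP n. a * emeasure M (hit a n))"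
  proof -
    have "incseq (hit a)" by (rule incseq_SucI) (auto simp: hit_def le_Suc_eq)
    with hit_M have "emeasure M (\<Union>n. hit a n) = (SUP n. emeasure M (hit a n))"
      by (intro SUP_emeasure_incseq[symmetric]) auto
    then show ?thesis by (simp add: SUP_mult_left_ennreal)
  qed
  moreover have "{\<omega> \<in> space M. \<exists>n. a \<le> Y n \<omega>} = (\<Union>n. hit a n)" by (auto simp: hit_def)
  ultimately show ?thesis by (simp add: SUP_least)
qed

end

section \<open>Stochastically quasi-Fejer monotone processes\<close>

locale stochastic_quasi_fejer = prob_space M
  for M :: "'b measure" +
  fixes Fil :: "nat \<Rightarrow> 'b measure"
    and F :: "'a::topological_space \<Rightarrow> ennreal"
    and \<phi> :: "'a \<Rightarrow> 'a \<Rightarrow> real"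
    and x :: "nat \<Rightarrow> 'b \<Rightarrow> 'a"
    and \<zeta> \<xi> :: "nat \<Rightarrow> 'b \<Rightarrow> real"
    and K :: real
  assumes filt_sub: "\<And>n. subalgebra M (Fil n)"
    and filt_mono: "\<And>m n. m \<le> n \<Longrightarrow> sets (Fil m) \<subseteq> sets (Fil n)"
    and phi_nonneg: "\<And>a b. \<phi> a b \<ge> 0"
    and adapted: "\<And>n. x n \<in> measurable (Fil n) borel"
    and zeta_meas: "\<And>n. \<zeta> n \<in> borel_measurable (Fil n)"
    and zeta_nonneg: "\<And>n \<omega>. \<omega> \<in> space M \<Longrightarrow> \<zeta> n \<omega> \<ge> 0"
    and zeta_summable: "AE \<omega> in M. summable (\<lambda>n. \<zeta> n \<omega>)"
    and xi_meas: "\<And>n. \<xi> n \<in> borel_measurable (Fil n)"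
    and xi_nonneg: "\<And>n \<omega>. \<omega> \<in> space M \<Longrightarrow> \<xi> n \<omega> \<ge> 0"
    and fejer: "\<And>n z. z \<in> measurable (Fil n) borel \<Longrightarrow> (AE \<omega> in M. F (z \<omega>) = 0) \<Longrightarrow>
        (\<integral>\<^sup>+ \<omega>. ennreal (\<phi> (z \<omega>) (x n \<omega>)) \<partial>M) < \<infinity> \<Longrightarrow>
        AE \<omega> in M. nn_cond_exp M (Fil n) (\<lambda>\<omega>. ennreal (\<phi> (z \<omega>) (x (Suc n) \<omega>))) \<omega>
          \<le> ennreal ((1 + \<zeta> n \<omega>) * \<phi> (z \<omega>) (x n \<omega>) + \<xi> n \<omega>)"
    and K_pos: "K > 0"
    and K_bound: "AE \<omega> in M. (\<Prod>n. 1 + \<zeta> n \<omega>) < K"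
begin

lemma measurable_Fil_mono: "k \<le> n \<Longrightarrow> f \<in> measurable (Fil k) N \<Longrightarrow> f \<in> measurable (Fil n) N"
  by (rule measurable_from_subalg[of "Fil n" "Fil k"])
     (use filt_sub filt_mono in \<open>auto simp: subalgebra_def\<close>)

lemma measurable_Fil_M: "f \<in> measurable (Fil n) N \<Longrightarrow> f \<in> measurable M N"
  by (rule measurable_from_subalg[OF filt_sub])

definition zeta_prod :: "nat \<Rightarrow> 'b \<Rightarrow> real" where
  "zeta_prod k \<omega> = (\<Prod>j<k. 1 + \<zeta> j \<omega>)"

lemma zeta_prod_ge_1: "\<omega> \<in> space M \<Longrightarrow> 1 \<le> zeta_prod k \<omega>"
  unfolding zeta_prod_def by (rule prod_ge_1) (simp add: zeta_nonneg)

lemma zeta_prod_Suc: "zeta_prod (Suc k) \<omega> = zeta_prod k \<omega> * (1 + \<zeta> k \<omega>)"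
  by (simp add: zeta_prod_def)

lemma zeta_prod_measurable: "k \<le> Suc n \<Longrightarrow> zeta_prod k \<in> borel_measurable (Fil n)"
  unfolding zeta_prod_def
  by (intro borel_measurable_prod borel_measurable_add borel_measurable_const
      measurable_Fil_mono[OF _ zeta_meas]) auto

lemma AE_zeta_prod_less: "AE \<omega> in M. \<forall>k. zeta_prod k \<omega> < K"
  using AE_space zeta_summable K_bound
proof eventually_elim
  case (elim \<omega>)
  have "zeta_prod k \<omega> \<le> (\<Prod>n. 1 + \<zeta> n \<omega>)" for k
    unfolding zeta_prod_def using elim zeta_nonneg by (intro prod_one_plus_le_prodinf) auto
  with elim(3) show ?case by (auto intro: le_less_trans)
qed

\<comment> \<open>Dividing by the partial products of \<open>1 + \<zeta>\<close> removes the multiplicative error of the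
    Fejer inequality; the bound \<open>K\<close> on the full product makes the division harmless.\<close>
definition normalised :: "('b \<Rightarrow> 'a) \<Rightarrow> nat \<Rightarrow> 'b \<Rightarrow> ennreal" where
  "normalised z k \<omega> = ennreal (\<phi> (z \<omega>) (x k \<omega>) / zeta_prod k \<omega>)"

lemma normalised_le_phi: "\<omega> \<in> space M \<Longrightarrow> normalised z k \<omega> \<le> ennreal (\<phi> (z \<omega>) (x k \<omega>))"
  unfolding normalised_def using zeta_prod_ge_1[of \<omega> k] phi_nonneg[of "z \<omega>" "x k \<omega>"]
  by (intro ennreal_leI) (simp add: divide_le_eq mult_le_cancel_left1)

lemma AE_phi_div_le_normalised: "AE \<omega> in M. \<forall>k. ennreal (\<phi> (z \<omega>) (x k \<omega>) / K) \<le> normalised z k \<omega>"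
  using AE_space AE_zeta_prod_less
proof eventually_elim
  case (elim \<omega>)
  have "\<phi> (z \<omega>) (x k \<omega>) / K \<le> \<phi> (z \<omega>) (x k \<omega>) / zeta_prod k \<omega>" for k
  proof (rule divide_left_mono)
    show "zeta_prod k \<omega> \<le> K" using elim(2) by (simp add: less_imp_le)
    show "0 < K * zeta_prod k \<omega>" using K_pos zeta_prod_ge_1[OF elim(1), of k] by simp
  qed (rule phi_nonneg)
  then show ?case unfolding normalised_def by (blast intro: ennreal_leI)
qed

lemma AE_phi_le_normalised: "AE \<omega> in M. \<forall>k. ennreal (\<phi> (z \<omega>) (x k \<omega>)) \<le> ennreal K * normalised z k \<omega>"
  using AE_phi_div_le_normalised[of z]
proof eventually_elim
  case (elim \<omega>)
  have "ennreal (\<phi> (z \<omega>) (x k \<omega>)) = ennreal K * ennreal (\<phi> (z \<omega>) (x k \<omega>) / K)" for k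
    using K_pos phi_nonneg by (simp flip: ennreal_mult)
  with elim show ?case by (simp add: mult_left_mono)
qed

lemma normalised_measurable:
  assumes "k \<le> n" "(\<lambda>\<omega>. \<phi> (z \<omega>) (x k \<omega>)) \<in> borel_measurable (Fil n)"
  shows "normalised z k \<in> borel_measurable (Fil n)"
proof -
  have [measurable]: "zeta_prod k \<in> borel_measurable (Fil n)"
    using assms(1) by (intro zeta_prod_measurable) simp
  note assms(2)[measurable]
  show ?thesis unfolding normalised_def by measurable
qed

lemma normalised_fejer_bound:
  assumes \<omega>: "\<omega> \<in> space M"
  shows "ennreal (1 / zeta_prod (Suc n) \<omega>) * ennreal ((1 + \<zeta> n \<omega>) * \<phi> (z \<omega>) (x n \<omega>) + \<xi> n \<omega>)
    \<le> normalised z n \<omega> + ennreal (\<xi> n \<omega>)"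
proof -
  let ?a = "\<phi> (z \<omega>) (x n \<omega>)" and ?p = "zeta_prod n \<omega>" and ?z = "\<zeta> n \<omega>" and ?x = "\<xi> n \<omega>"
  have nonneg: "1 \<le> ?p" "0 \<le> ?z" "0 \<le> ?x" "0 \<le> ?a"
    using zeta_prod_ge_1[OF \<omega>] zeta_nonneg[OF \<omega>] xi_nonneg[OF \<omega>] phi_nonneg by auto
  have p1: "1 \<le> ?p * (1 + ?z)" using mult_mono[of 1 ?p 1 "1 + ?z"] nonneg by simp
  have "((1 + ?z) * ?a + ?x) / (?p * (1 + ?z)) = ?a / ?p + ?x / (?p * (1 + ?z))"
    using nonneg by (simp add: add_divide_distrib)
  also have "\<dots> \<le> ?a / ?p + ?x"
    using p1 nonneg by (simp add: divide_le_eq mult_le_cancel_left1)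
  finally have le: "1 / zeta_prod (Suc n) \<omega> * ((1 + ?z) * ?a + ?x) \<le> ?a / ?p + ?x"
    by (simp add: zeta_prod_Suc)
  have "ennreal (1 / zeta_prod (Suc n) \<omega>) * ennreal ((1 + ?z) * ?a + ?x)
      = ennreal (1 / zeta_prod (Suc n) \<omega> * ((1 + ?z) * ?a + ?x))"
    using p1 nonneg by (intro ennreal_mult[symmetric]) (simp_all add: zeta_prod_Suc)
  also have "\<dots> \<le> ennreal (?a / ?p + ?x)" using le by (rule ennreal_leI)
  also have "\<dots> = normalised z n \<omega> + ennreal ?x"
    using nonneg by (simp add: normalised_def ennreal_plus)
  finally show ?thesis .
qed

lemma sigma_finite_subalgebra_Fil: "sigma_finite_subalgebra M (Fil n)"
  by (rule finite_measure_subalgebra_is_sigma_finite)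
     (simp add: finite_measure_subalgebra_def finite_measure_subalgebra_axioms_def
       filt_sub finite_measure_axioms)

lemma nn_integral_phi_less_top:
  assumes "(\<integral>\<^sup>+\<omega>. normalised z n \<omega> \<partial>M) < \<infinity>" "normalised z n \<in> borel_measurable M"
  shows "(\<integral>\<^sup>+\<omega>. ennreal (\<phi> (z \<omega>) (x n \<omega>)) \<partial>M) < \<infinity>"
proof -
  have "(\<integral>\<^sup>+\<omega>. ennreal (\<phi> (z \<omega>) (x n \<omega>)) \<partial>M) \<le> (\<integral>\<^sup>+\<omega>. ennreal K * normalised z n \<omega> \<partial>M)"
    using AE_phi_le_normalised[of z] by (intro nn_integral_mono_AE) (auto elim: eventually_mono)
  also have "\<dots> < \<infinity>" using assms by (simp add: nn_integral_cmult ennreal_mult_less_top)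
  finally show ?thesis .
qed

lemma normalised_step:
  assumes z: "z \<in> measurable (Fil n) borel" "\<And>\<omega>. F (z \<omega>) = 0"
    and phi_meas: "(\<lambda>\<omega>. \<phi> (z \<omega>) (x n \<omega>)) \<in> borel_measurable (Fil n)"
      "(\<lambda>\<omega>. \<phi> (z \<omega>) (x (Suc n) \<omega>)) \<in> borel_measurable M"
    and A: "A \<in> sets (Fil n)"
    and fin: "(\<integral>\<^sup>+\<omega>. normalised z n \<omega> \<partial>M) < \<infinity>"
  shows "(\<integral>\<^sup>+\<omega>\<in>A. normalised z (Suc n) \<omega> \<partial>M)
    \<le> (\<integral>\<^sup>+\<omega>\<in>A. normalised z n \<omega> \<partial>M) + (\<integral>\<^sup>+\<omega>. ennreal (\<xi> n \<omega>) \<partial>M)"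
proof -
  interpret sigma_finite_subalgebra M "Fil n" by (rule sigma_finite_subalgebra_Fil)
  note phi_meas[measurable]
  have [measurable]: "zeta_prod (Suc n) \<in> borel_measurable (Fil n)" by (rule zeta_prod_measurable) simp
  have [measurable]: "A \<in> sets (Fil n)" "A \<in> sets M" using A filt_sub[of n] by (auto simp: subalgebra_def)
  have [measurable]: "\<xi> n \<in> borel_measurable M" by (rule measurable_Fil_M[OF xi_meas])
  have normalised_M[measurable]: "normalised z n \<in> borel_measurable M"
    by (rule measurable_Fil_M[OF normalised_measurable[OF order_refl phi_meas(1)]])
  have cond_exp_le: "AE \<omega> in M. nn_cond_exp M (Fil n) (\<lambda>\<omega>. ennreal (\<phi> (z \<omega>) (x (Suc n) \<omega>))) \<omega>
      \<le> ennreal ((1 + \<zeta> n \<omega>) * \<phi> (z \<omega>) (x n \<omega>) + \<xi> n \<omega>)"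
    using fejer[OF z(1) _ nn_integral_phi_less_top[OF fin normalised_M]] z(2) by simp
  define g where "g \<omega> = indicator A \<omega> * ennreal (1 / zeta_prod (Suc n) \<omega>)" for \<omega>
  have [measurable]: "g \<in> borel_measurable (Fil n)" unfolding g_def by measurable
  have "(\<integral>\<^sup>+\<omega>\<in>A. normalised z (Suc n) \<omega> \<partial>M)
      = (\<integral>\<^sup>+\<omega>. g \<omega> * ennreal (\<phi> (z \<omega>) (x (Suc n) \<omega>)) \<partial>M)"
  proof (rule nn_integral_cong)
    fix \<omega> assume "\<omega> \<in> space M"
    then have "0 < zeta_prod (Suc n) \<omega>" using zeta_prod_ge_1[of \<omega> "Suc n"] by linarith
    then have "ennreal (1 / zeta_prod (Suc n) \<omega>) * ennreal (\<phi> (z \<omega>) (x (Suc n) \<omega>))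
        = normalised z (Suc n) \<omega>"
      unfolding normalised_def by (subst ennreal_mult[symmetric]) (auto simp: phi_nonneg)
    then show "normalised z (Suc n) \<omega> * indicator A \<omega> = g \<omega> * ennreal (\<phi> (z \<omega>) (x (Suc n) \<omega>))"
      by (simp add: g_def mult_ac)
  qed
  also have "\<dots> = (\<integral>\<^sup>+\<omega>. g \<omega> * nn_cond_exp M (Fil n) (\<lambda>\<omega>. ennreal (\<phi> (z \<omega>) (x (Suc n) \<omega>))) \<omega> \<partial>M)"
    by (rule nn_cond_exp_intg[symmetric]) measurable
  also have "\<dots> \<le> (\<integral>\<^sup>+\<omega>. g \<omega> * ennreal ((1 + \<zeta> n \<omega>) * \<phi> (z \<omega>) (x n \<omega>) + \<xi> n \<omega>) \<partial>M)"
    using cond_exp_le by (intro nn_integral_mono_AE) (auto elim!: eventually_mono intro: mult_left_mono)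
  also have "\<dots> \<le> (\<integral>\<^sup>+\<omega>. normalised z n \<omega> * indicator A \<omega> + ennreal (\<xi> n \<omega>) \<partial>M)"
    using normalised_fejer_bound
    by (intro nn_integral_mono) (auto simp: g_def indicator_def)
  also have "\<dots> = (\<integral>\<^sup>+\<omega>\<in>A. normalised z n \<omega> \<partial>M) + (\<integral>\<^sup>+\<omega>. ennreal (\<xi> n \<omega>) \<partial>M)"
    by (rule nn_integral_add) measurable
  finally show ?thesis .
qed

lemma almost_supermartingale_normalised:
  assumes z: "z \<in> measurable (Fil n0) borel" "\<And>\<omega>. F (z \<omega>) = 0"
    and phi_adapted: "\<And>n. n0 \<le> n \<Longrightarrow> (\<lambda>\<omega>. \<phi> (z \<omega>) (x n \<omega>)) \<in> borel_measurable (Fil n)"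
  shows "almost_supermartingale M (\<lambda>d. Fil (n0 + d)) (\<lambda>d. normalised z (n0 + d))
    (\<lambda>d. \<integral>\<^sup>+\<omega>. ennreal (\<xi> (n0 + d) \<omega>) \<partial>M)"
proof
  fix d d' :: nat and A
  show "subalgebra M (Fil (n0 + d))" by (rule filt_sub)
  show "d \<le> d' \<Longrightarrow> sets (Fil (n0 + d)) \<subseteq> sets (Fil (n0 + d'))" by (intro filt_mono) simp
  show "normalised z (n0 + d) \<in> borel_measurable (Fil (n0 + d))"
    by (intro normalised_measurable phi_adapted) simp_all
  assume "A \<in> sets (Fil (n0 + d))" "(\<integral>\<^sup>+\<omega>. normalised z (n0 + d) \<omega> \<partial>M) < \<infinity>"
  then show "(\<integral>\<^sup>+\<omega>\<in>A. normalised z (n0 + Suc d) \<omega> \<partial>M)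
      \<le> (\<integral>\<^sup>+\<omega>\<in>A. normalised z (n0 + d) \<omega> \<partial>M) + (\<integral>\<^sup>+\<omega>. ennreal (\<xi> (n0 + d) \<omega>) \<partial>M)"
    using normalised_step[OF measurable_Fil_mono[OF _ z(1)] z(2) phi_adapted
        measurable_Fil_M[OF phi_adapted], of "n0 + d"]
    by simp
qed

lemma normalised_total_le:
  assumes "(\<integral>\<^sup>+\<omega>. ennreal (\<phi> (z \<omega>) (x n0 \<omega>)) \<partial>M) + (\<Sum>j. \<integral>\<^sup>+\<omega>. ennreal (\<xi> (n0 + j) \<omega>) \<partial>M)
      \<le> ennreal r"
  shows "(\<integral>\<^sup>+\<omega>. normalised z (n0 + 0) \<omega> \<partial>M) + (\<Sum>j. \<integral>\<^sup>+\<omega>. ennreal (\<xi> (n0 + j) \<omega>) \<partial>M) \<le> ennreal r"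
proof -
  have "(\<integral>\<^sup>+\<omega>. normalised z n0 \<omega> \<partial>M) \<le> (\<integral>\<^sup>+\<omega>. ennreal (\<phi> (z \<omega>) (x n0 \<omega>)) \<partial>M)"
    by (intro nn_integral_mono normalised_le_phi)
  from order_trans[OF add_right_mono[OF this] assms] show ?thesis by simp
qed

context
  fixes z n0 r
  assumes z: "z \<in> measurable (Fil n0) borel" "\<And>\<omega>. F (z \<omega>) = 0"
    and phi_adapted: "\<And>n. n0 \<le> n \<Longrightarrow> (\<lambda>\<omega>. \<phi> (z \<omega>) (x n \<omega>)) \<in> borel_measurable (Fil n)"
    and total: "(\<integral>\<^sup>+\<omega>. ennreal (\<phi> (z \<omega>) (x n0 \<omega>)) \<partial>M) + (\<Sum>j. \<integral>\<^sup>+\<omega>. ennreal (\<xi> (n0 + j) \<omega>) \<partial>M)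
      \<le> ennreal r" "0 \<le> r"
begin

interpretation Y: almost_supermartingale M "\<lambda>d. Fil (n0 + d)" "\<lambda>d. normalised z (n0 + d)"
  "\<lambda>d. \<integral>\<^sup>+\<omega>. ennreal (\<xi> (n0 + d) \<omega>) \<partial>M"
  by (rule almost_supermartingale_normalised[OF z phi_adapted])

lemma quasi_fejer_mean_bound:
  assumes "n0 \<le> m"
  shows "(\<integral>\<^sup>+\<omega>. ennreal (\<phi> (z \<omega>) (x m \<omega>)) \<partial>M) \<le> ennreal (K * r)"
proof -
  obtain d where d: "m = n0 + d" using assms le_iff_add by blast
  have "(\<integral>\<^sup>+\<omega>. ennreal (\<phi> (z \<omega>) (x m \<omega>)) \<partial>M) \<le> (\<integral>\<^sup>+\<omega>. ennreal K * normalised z (n0 + d) \<omega> \<partial>M)"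
    using AE_phi_le_normalised[of z] by (intro nn_integral_mono_AE) (auto simp: d elim: eventually_mono)
  also have "\<dots> = ennreal K * (\<integral>\<^sup>+\<omega>. normalised z (n0 + d) \<omega> \<partial>M)"
    by (rule nn_integral_cmult) simp
  also have "\<dots> \<le> ennreal K * ennreal r"
    using order_trans[OF Y.nn_integral_le normalised_total_le[OF total(1)]] by (rule mult_left_mono) simp
  finally show ?thesis using K_pos total(2) by (simp add: ennreal_mult)
qed

lemma quasi_fejer_deviation_bound:
  assumes c: "0 < c"
  shows "measure M {\<omega> \<in> space M. \<exists>m\<ge>n0. c \<le> \<phi> (z \<omega>) (x m \<omega>)} \<le> K * r / c"
proof -
  let ?A = "{\<omega> \<in> space M. \<exists>m\<ge>n0. c \<le> \<phi> (z \<omega>) (x m \<omega>)}"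
    and ?B = "{\<omega> \<in> space M. \<exists>d. ennreal (c / K) \<le> normalised z (n0 + d) \<omega>}"
  have "AE \<omega> in M. \<omega> \<in> ?A \<longrightarrow> \<omega> \<in> ?B"
    using AE_phi_div_le_normalised[of z]
  proof eventually_elim
    case (elim \<omega>)
    show ?case
    proof
      assume "\<omega> \<in> ?A"
      then obtain d where \<omega>: "\<omega> \<in> space M" and "c \<le> \<phi> (z \<omega>) (x (n0 + d) \<omega>)"
        by (auto simp: le_iff_add)
      then have "ennreal (c / K) \<le> ennreal (\<phi> (z \<omega>) (x (n0 + d) \<omega>) / K)"
        using K_pos by (intro ennreal_leI divide_right_mono) auto
      with elim \<omega> show "\<omega> \<in> ?B" by (blast intro: order_trans)
    qed
  qed
  then have "emeasure M ?A \<le> emeasure M ?B"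
    by (rule emeasure_mono_AE) measurable
  then have "ennreal (c / K) * emeasure M ?A \<le> ennreal (c / K) * emeasure M ?B"
    by (rule mult_left_mono) simp
  also have "\<dots> \<le> ennreal r"
    using order_trans[OF Y.maximal_inequality normalised_total_le[OF total(1)]] by simp
  finally have "ennreal (c / K) * ennreal (measure M ?A) \<le> ennreal r"
    by (simp add: emeasure_eq_measure)
  then have "ennreal (c / K * measure M ?A) \<le> ennreal r"
    using c K_pos by (subst ennreal_mult) auto
  then have "c / K * measure M ?A \<le> r" using total(2) by simp
  then show ?thesis using c K_pos by (simp add: field_simps)
qed

end

end

section \<open>Convergence with rates\<close>

locale quasi_fejer_regular = stochastic_quasi_fejer M Fil F \<phi> x \<zeta> \<xi> K
  for M :: "'b measure" and Fil and F :: "'a::polish_space \<Rightarrow> ennreal" and \<phi> x \<zeta> \<xi> K +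
  fixes \<theta> :: "real \<Rightarrow> real"
    and chi :: "real \<Rightarrow> nat"
    and \<Phi> :: "real \<Rightarrow> nat \<Rightarrow> real"
    and D :: "('b \<Rightarrow> 'a) set"
    and \<tau> :: "real \<Rightarrow> real"
  assumes zer_closed: "closed {z. F z = 0}"
    and zer_ne: "{z. F z = 0} \<noteq> {}"
    and phi_cont: "\<And>b. continuous_on UNIV (\<lambda>a. \<phi> a b)"
    and phi_meas: "\<And>a. (\<lambda>b. \<phi> a b) \<in> borel_measurable borel"
    and theta_mono: "mono_on {0..} \<theta>"
    and theta_convex: "convex_on {0..} \<theta>"
    and theta_0: "\<theta> 0 = 0"
    and theta_pos: "\<And>e. e > 0 \<Longrightarrow> \<theta> e > 0"
    and consistent: "\<And>e a b. e > 0 \<Longrightarrow> \<phi> a b < \<theta> e \<Longrightarrow> dist a b < e"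
    and chi: "\<And>e. e > 0 \<Longrightarrow> (\<Sum>n. \<integral>\<^sup>+ \<omega>. ennreal (\<xi> (n + chi e) \<omega>) \<partial>M) < ennreal e"
    and liminf_bound: "\<And>e N. e > 0 \<Longrightarrow>
        \<exists>n. N \<le> n \<and> real n \<le> \<Phi> e N \<and> (\<integral>\<^sup>+ \<omega>. F (x n \<omega>) \<partial>M) < ennreal e"
    and x_in_D: "\<And>n. x n \<in> D"
    and tau_pos: "\<And>e. e > 0 \<Longrightarrow> \<tau> e > 0"
    and tau_reg: "\<And>e y. e > 0 \<Longrightarrow> y \<in> D \<Longrightarrow> (\<integral>\<^sup>+ \<omega>. F (y \<omega>) \<partial>M) < ennreal (\<tau> e) \<Longrightarrow>
        (\<integral>\<^sup>+ \<omega>. ennreal (phi_dist \<phi> {z. F z = 0} (y \<omega>)) \<partial>M) < ennreal e"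
begin

definition rate :: "real \<Rightarrow> real" where
  "rate \<epsilon> = \<Phi> (\<tau> (\<epsilon> / (3 * K))) (chi (\<epsilon> / (3 * K)))"

lemma theta_dist_le_phi: "\<theta> (dist a b) \<le> \<phi> a b"
proof (cases "a = b")
  case True
  then show ?thesis using theta_0 phi_nonneg by simp
next
  case False
  then show ?thesis using consistent[of "dist a b" a b] by force
qed

lemma anchor_near_liminf_time:
  assumes "0 < \<delta>"
  obtains z n0 where "chi \<delta> \<le> n0" "real n0 \<le> \<Phi> (\<tau> \<delta>) (chi \<delta>)"
    "z \<in> measurable (Fil n0) borel" "\<And>\<omega>. F (z \<omega>) = 0"
    "\<And>m. (\<lambda>\<omega>. \<phi> (z \<omega>) (x m \<omega>)) \<in> borel_measurable (Fil (max n0 m))"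
    "(\<integral>\<^sup>+\<omega>. ennreal (\<phi> (z \<omega>) (x n0 \<omega>)) \<partial>M) < ennreal \<delta>"
proof -
  obtain e :: "nat \<Rightarrow> 'a" where e: "range e \<subseteq> {z. F z = 0}" "{z. F z = 0} \<subseteq> closure (range e)"
    using dense_sequence[OF zer_ne] by blast
  obtain n0 where n0: "chi \<delta> \<le> n0" "real n0 \<le> \<Phi> (\<tau> \<delta>) (chi \<delta>)"
    "(\<integral>\<^sup>+\<omega>. F (x n0 \<omega>) \<partial>M) < ennreal (\<tau> \<delta>)"
    using liminf_bound[OF tau_pos[OF assms]] by blast
  have "(\<integral>\<^sup>+\<omega>. ennreal (phi_dist \<phi> {z. F z = 0} (x n0 \<omega>)) \<partial>M) < ennreal \<delta>"
    by (rule tau_reg[OF assms x_in_D n0(3)])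
  then have "(\<integral>\<^sup>+\<omega>. ennreal (INF k. \<phi> (e k) (x n0 \<omega>)) \<partial>M) < ennreal \<delta>"
    by (simp add: phi_dist_eq_INF_dense[OF phi_cont phi_nonneg e])
  then obtain J where J: "J \<in> measurable (Fil n0) (count_space UNIV)"
    "(\<integral>\<^sup>+\<omega>. ennreal (\<phi> (e (J \<omega>)) (x n0 \<omega>)) \<partial>M) < ennreal \<delta>"
    by (rule measurable_near_minimiser[OF filt_sub measurable_compose[OF adapted phi_meas] phi_nonneg])
  show ?thesis
  proof (rule that[of n0 "\<lambda>\<omega>. e (J \<omega>)"])
    show "(\<lambda>\<omega>. e (J \<omega>)) \<in> measurable (Fil n0) borel"
      by (rule measurable_compose[OF J(1)]) simp
    show "F (e (J \<omega>)) = 0" for \<omega> using e(1) by auto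
    show "(\<lambda>\<omega>. \<phi> (e (J \<omega>)) (x m \<omega>)) \<in> borel_measurable (Fil (max n0 m))" for m
    proof (rule measurable_compose_countable[where f = "\<lambda>k \<omega>. \<phi> (e k) (x m \<omega>)",
          OF _ measurable_Fil_mono[OF _ J(1)]])
      fix k
      show "(\<lambda>\<omega>. \<phi> (e k) (x m \<omega>)) \<in> borel_measurable (Fil (max n0 m))"
        by (rule measurable_compose[OF measurable_Fil_mono[OF _ adapted] phi_meas]) simp
    qed simp
  qed (use n0 J(2) in auto)
qed

\<comment> \<open>An anchor is a random point of the zero set, known at a time \<open>n0 \<le> rate \<epsilon>\<close>, from which the
    process stays \<open>\<phi>\<close>-close from then on, in mean and with high probability.\<close>
lemma anchor_exists:
  assumes "0 < \<epsilon>"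
  obtains z n0 where "z \<in> borel_measurable M" "\<And>\<omega>. F (z \<omega>) = 0" "real n0 \<le> rate \<epsilon>"
    "\<And>m. (\<lambda>\<omega>. \<phi> (z \<omega>) (x m \<omega>)) \<in> borel_measurable M"
    "\<And>m. n0 \<le> m \<Longrightarrow> (\<integral>\<^sup>+\<omega>. ennreal (\<phi> (z \<omega>) (x m \<omega>)) \<partial>M) \<le> ennreal (2 * \<epsilon> / 3)"
    "\<And>c. 0 < c \<Longrightarrow> measure M {\<omega> \<in> space M. \<exists>m\<ge>n0. c \<le> \<phi> (z \<omega>) (x m \<omega>)} \<le> 2 * \<epsilon> / (3 * c)"
proof -
  define \<delta> where "\<delta> = \<epsilon> / (3 * K)"
  have \<delta>: "0 < \<delta>" "K * (2 * \<delta>) = 2 * \<epsilon> / 3" using assms K_pos by (simp_all add: \<delta>_def)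
  obtain z n0 where n0: "chi \<delta> \<le> n0" "real n0 \<le> \<Phi> (\<tau> \<delta>) (chi \<delta>)"
    and z: "z \<in> measurable (Fil n0) borel" "\<And>\<omega>. F (z \<omega>) = 0"
    and phi_z: "\<And>m. (\<lambda>\<omega>. \<phi> (z \<omega>) (x m \<omega>)) \<in> borel_measurable (Fil (max n0 m))"
    and phi_z_n0: "(\<integral>\<^sup>+\<omega>. ennreal (\<phi> (z \<omega>) (x n0 \<omega>)) \<partial>M) < ennreal \<delta>"
    by (rule anchor_near_liminf_time[OF \<delta>(1)]) blast
  have phi_adapted: "(\<lambda>\<omega>. \<phi> (z \<omega>) (x n \<omega>)) \<in> borel_measurable (Fil n)" if "n0 \<le> n" for n
    using phi_z[of n] that by (simp add: max_absorb2)
  have tail: "(\<Sum>j. \<integral>\<^sup>+\<omega>. ennreal (\<xi> (n0 + j) \<omega>) \<partial>M) < ennreal \<delta>"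
    using ennreal_suminf_tail_mono[OF n0(1), of "\<lambda>n. \<integral>\<^sup>+\<omega>. ennreal (\<xi> n \<omega>) \<partial>M"] chi[OF \<delta>(1)]
    by (simp add: add.commute)
  have "(\<integral>\<^sup>+\<omega>. ennreal (\<phi> (z \<omega>) (x n0 \<omega>)) \<partial>M) + (\<Sum>j. \<integral>\<^sup>+\<omega>. ennreal (\<xi> (n0 + j) \<omega>) \<partial>M)
      \<le> ennreal \<delta> + ennreal \<delta>"
    using phi_z_n0 tail by (intro add_mono) simp_all
  also have "\<dots> = ennreal (2 * \<delta>)" using \<delta> by (simp flip: ennreal_plus)
  finally have total: "(\<integral>\<^sup>+\<omega>. ennreal (\<phi> (z \<omega>) (x n0 \<omega>)) \<partial>M)
      + (\<Sum>j. \<integral>\<^sup>+\<omega>. ennreal (\<xi> (n0 + j) \<omega>) \<partial>M) \<le> ennreal (2 * \<delta>)" .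
  show ?thesis
  proof (rule that)
    show "z \<in> borel_measurable M" by (rule measurable_Fil_M[OF z(1)])
    show "real n0 \<le> rate \<epsilon>" using n0(2) by (simp add: rate_def \<delta>_def)
    show "(\<lambda>\<omega>. \<phi> (z \<omega>) (x m \<omega>)) \<in> borel_measurable M" for m by (rule measurable_Fil_M[OF phi_z])
    show "(\<integral>\<^sup>+\<omega>. ennreal (\<phi> (z \<omega>) (x m \<omega>)) \<partial>M) \<le> ennreal (2 * \<epsilon> / 3)" if "n0 \<le> m" for m
      using quasi_fejer_mean_bound[OF z phi_adapted total _ that] \<delta> by simp
    show "measure M {\<omega> \<in> space M. \<exists>m\<ge>n0. c \<le> \<phi> (z \<omega>) (x m \<omega>)} \<le> 2 * \<epsilon> / (3 * c)" if "0 < c" for c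
      using quasi_fejer_deviation_bound[OF z phi_adapted total _ that] \<delta> by simp
  qed (rule z(2))
qed

lemma close_to_anchor_outside_small_set:
  assumes "0 < \<epsilon>" "0 < l"
  obtains z n0 E where "z \<in> borel_measurable M" "\<And>\<omega>. F (z \<omega>) = 0" "real n0 \<le> rate (l * \<theta> \<epsilon>)"
    "E \<in> sets M" "measure M E \<le> 2 * l / 3"
    "\<And>\<omega> m. \<omega> \<in> space M - E \<Longrightarrow> n0 \<le> m \<Longrightarrow> dist (z \<omega>) (x m \<omega>) < \<epsilon>"
proof -
  have \<theta>\<epsilon>: "0 < \<theta> \<epsilon>" by (rule theta_pos[OF assms(1)])
  with assms(2) have "0 < l * \<theta> \<epsilon>" by simp
  then obtain z n0 where z: "z \<in> borel_measurable M" "\<And>\<omega>. F (z \<omega>) = 0"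
    "real n0 \<le> rate (l * \<theta> \<epsilon>)" "\<And>m. (\<lambda>\<omega>. \<phi> (z \<omega>) (x m \<omega>)) \<in> borel_measurable M"
    and "\<And>m. n0 \<le> m \<Longrightarrow> (\<integral>\<^sup>+\<omega>. ennreal (\<phi> (z \<omega>) (x m \<omega>)) \<partial>M) \<le> ennreal (2 * (l * \<theta> \<epsilon>) / 3)"
    and dev: "\<And>c. 0 < c \<Longrightarrow>
      measure M {\<omega> \<in> space M. \<exists>m\<ge>n0. c \<le> \<phi> (z \<omega>) (x m \<omega>)} \<le> 2 * (l * \<theta> \<epsilon>) / (3 * c)"
    by (rule anchor_exists) blast
  let ?E = "{\<omega> \<in> space M. \<exists>m\<ge>n0. \<theta> \<epsilon> \<le> \<phi> (z \<omega>) (x m \<omega>)}"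
  have "?E \<in> sets M" using z(4) by measurable
  moreover have "measure M ?E \<le> 2 * l / 3" using dev[OF \<theta>\<epsilon>] \<theta>\<epsilon> by simp
  moreover have "dist (z \<omega>) (x m \<omega>) < \<epsilon>" if "\<omega> \<in> space M - ?E" "n0 \<le> m" for \<omega> m
    using that by (intro consistent[OF assms(1)]) auto
  ultimately show ?thesis using that[OF z(1-3)] by blast
qed

lemma AE_convergent_to_zero_set:
  "AE \<omega> in M. convergent (\<lambda>n. x n \<omega>) \<and> lim (\<lambda>n. x n \<omega>) \<in> {z. F z = 0}"
proof -
  have "AE \<omega> in M. \<exists>s\<in>{z. F z = 0}. \<forall>\<^sub>F n in sequentially. dist s (x n \<omega>) < inverse (Suc j)" for j
  proof (rule AE_I_small_exceptional_sets)
    fix l :: real assume "0 < l"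
    have "0 < inverse (real (Suc j))" by simp
    from close_to_anchor_outside_small_set[OF this \<open>0 < l\<close>]
    obtain z n0 E where "z \<in> borel_measurable M" and z: "\<And>\<omega>. F (z \<omega>) = 0"
      and "real n0 \<le> rate (l * \<theta> (inverse (Suc j)))"
      and E: "E \<in> sets M" "measure M E \<le> 2 * l / 3"
      and close: "\<And>\<omega> m. \<omega> \<in> space M - E \<Longrightarrow> n0 \<le> m \<Longrightarrow> dist (z \<omega>) (x m \<omega>) < inverse (Suc j)"
      by blast
    have "{\<omega> \<in> space M. \<not> (\<exists>s\<in>{z. F z = 0}. \<forall>\<^sub>F n in sequentially. dist s (x n \<omega>) < inverse (Suc j))} \<subseteq> E"
      using z close by (force simp: eventually_sequentially)
    with E \<open>0 < l\<close> show "\<exists>E\<in>sets M. measure M E \<le> l \<and>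
        {\<omega> \<in> space M. \<not> (\<exists>s\<in>{z. F z = 0}. \<forall>\<^sub>F n in sequentially. dist s (x n \<omega>) < inverse (Suc j))} \<subseteq> E"
      by (intro bexI[of _ E]) auto
  qed
  then have "AE \<omega> in M. \<forall>j. \<exists>s\<in>{z. F z = 0}. \<forall>\<^sub>F n in sequentially. dist s (x n \<omega>) < inverse (Suc j)"
    by (simp add: AE_all_countable)
  then show ?thesis
  proof eventually_elim
    case (elim \<omega>)
    have near: "\<exists>s\<in>{z. F z = 0}. \<forall>\<^sub>F n in sequentially. dist s (x n \<omega>) < \<epsilon>" if \<epsilon>: "0 < \<epsilon>" for \<epsilon>
    proof -
      obtain j where "inverse (Suc j) < \<epsilon>" using reals_Archimedean[OF \<epsilon>] by blast
      with elim show ?thesis by (blast intro: eventually_mono order.strict_trans)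
    qed
    show ?case
      using convergent_if_eventually_near[OF near] zer_closed by (simp add: closure_closed)
  qed
qed

lemma rate_in_probability:
  assumes lim: "AE \<omega> in M. (\<lambda>n. x n \<omega>) \<longlonglongrightarrow> xl \<omega>" and "0 < l" "0 < \<epsilon>"
  shows "measure M {\<omega> \<in> space M. \<exists>n. real n \<ge> rate (l * \<theta> (\<epsilon> / 2)) \<and> dist (x n \<omega>) (xl \<omega>) \<ge> \<epsilon>} < l"
proof -
  let ?A = "{\<omega> \<in> space M. \<exists>n. real n \<ge> rate (l * \<theta> (\<epsilon> / 2)) \<and> dist (x n \<omega>) (xl \<omega>) \<ge> \<epsilon>}"
  have "0 < \<epsilon> / 2" using assms(3) by simp
  from close_to_anchor_outside_small_set[OF this assms(2)]
  obtain z n0 E where "z \<in> borel_measurable M" "\<And>\<omega>. F (z \<omega>) = 0"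
    and n0: "real n0 \<le> rate (l * \<theta> (\<epsilon> / 2))" and E: "E \<in> sets M" "measure M E \<le> 2 * l / 3"
    and close: "\<And>\<omega> m. \<omega> \<in> space M - E \<Longrightarrow> n0 \<le> m \<Longrightarrow> dist (z \<omega>) (x m \<omega>) < \<epsilon> / 2"
    by blast
  have "AE \<omega> in M. \<omega> \<in> ?A \<longrightarrow> \<omega> \<in> E"
    using lim
  proof eventually_elim
    case (elim \<omega>)
    show ?case
    proof (rule impI, rule ccontr)
      assume "\<omega> \<in> ?A" "\<omega> \<notin> E"
      then obtain n where \<omega>: "\<omega> \<in> space M - E" and n: "rate (l * \<theta> (\<epsilon> / 2)) \<le> real n" "\<epsilon> \<le> dist (x n \<omega>) (xl \<omega>)"
        by auto
      from n(1) n0 have "n0 \<le> n" by linarith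
      have "\<forall>\<^sub>F m in sequentially. dist (z \<omega>) (x m \<omega>) \<le> \<epsilon> / 2"
        using close[OF \<omega>] by (auto simp: eventually_sequentially intro: less_imp_le)
      with tendsto_dist[OF tendsto_const elim] have "dist (z \<omega>) (xl \<omega>) \<le> \<epsilon> / 2"
        using sequentially_bot by (rule tendsto_upperbound)
      moreover have "dist (z \<omega>) (x n \<omega>) < \<epsilon> / 2" using close[OF \<omega> \<open>n0 \<le> n\<close>] .
      ultimately show False using n(2) dist_triangle3[of "x n \<omega>" "xl \<omega>" "z \<omega>"] by linarith
    qed
  qed
  then have "emeasure M ?A \<le> emeasure M E" using E(1) by (rule emeasure_mono_AE)
  then have "measure M ?A \<le> measure M E" by (simp add: emeasure_eq_measure)
  with E(2) \<open>0 < l\<close> show ?thesis by linarith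
qed

lemma rate_in_mean:
  assumes xl[measurable]: "xl \<in> borel_measurable M" and lim: "AE \<omega> in M. (\<lambda>n. x n \<omega>) \<longlonglongrightarrow> xl \<omega>"
    and "0 < \<epsilon>" and n: "rate (\<theta> (\<epsilon> / 2)) \<le> real n"
  shows "(\<integral>\<^sup>+\<omega>. ennreal (dist (x n \<omega>) (xl \<omega>)) \<partial>M) < ennreal \<epsilon>"
proof -
  have \<theta>\<epsilon>: "0 < \<theta> (\<epsilon> / 2)" using theta_pos \<open>0 < \<epsilon>\<close> by simp
  then obtain z n0 where z[measurable]: "z \<in> borel_measurable M" and "\<And>\<omega>. F (z \<omega>) = 0"
    and n0: "real n0 \<le> rate (\<theta> (\<epsilon> / 2))"
    and "\<And>m. (\<lambda>\<omega>. \<phi> (z \<omega>) (x m \<omega>)) \<in> borel_measurable M"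
    and mean: "\<And>m. n0 \<le> m \<Longrightarrow> (\<integral>\<^sup>+\<omega>. ennreal (\<phi> (z \<omega>) (x m \<omega>)) \<partial>M) \<le> ennreal (2 * \<theta> (\<epsilon> / 2) / 3)"
    and "\<And>c. 0 < c \<Longrightarrow>
      measure M {\<omega> \<in> space M. \<exists>m\<ge>n0. c \<le> \<phi> (z \<omega>) (x m \<omega>)} \<le> 2 * \<theta> (\<epsilon> / 2) / (3 * c)"
    by (rule anchor_exists) blast
  have [measurable]: "x m \<in> borel_measurable M" for m by (rule measurable_Fil_M[OF adapted])
  define q where "q = 2 * \<theta> (\<epsilon> / 2) / 3"
  have q: "0 \<le> q" "q < \<theta> (\<epsilon> / 2)" using \<theta>\<epsilon> by (auto simp: q_def)
  \<comment> \<open>A little room below \<open>\<epsilon> / 2\<close> is needed, as the mean bounds below only survive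
      the limit \<open>m \<rightarrow> \<infinity>\<close> non-strictly.\<close>
  obtain a where a: "0 < a" "a < \<epsilon> / 2" "q < \<theta> a"
    using convex_on_gap_below[OF theta_convex _ q(2)] \<open>0 < \<epsilon>\<close> by auto
  have dist_z: "(\<integral>\<^sup>+\<omega>. ennreal (dist (z \<omega>) (x m \<omega>)) \<partial>M) \<le> ennreal a" if "n0 \<le> m" for m
  proof (rule less_imp_le, rule nn_integral_less_by_convex_modulus)
    show "(\<integral>\<^sup>+\<omega>. ennreal (\<theta> (dist (z \<omega>) (x m \<omega>))) \<partial>M) \<le> ennreal q"
      using order_trans[OF nn_integral_mono mean[OF that]] theta_dist_le_phi
      by (simp add: q_def ennreal_leI)
  qed (use theta_convex theta_mono theta_0 theta_pos q a in auto)
  have "(\<integral>\<^sup>+\<omega>. ennreal (dist (x n \<omega>) (xl \<omega>)) \<partial>M)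
      \<le> (\<integral>\<^sup>+\<omega>. ennreal (dist (z \<omega>) (x n \<omega>)) + ennreal (dist (z \<omega>) (xl \<omega>)) \<partial>M)"
    by (intro nn_integral_mono) (simp add: ennreal_plus[symmetric] ennreal_leI dist_triangle3 del: ennreal_plus)
  also have "\<dots> = (\<integral>\<^sup>+\<omega>. ennreal (dist (z \<omega>) (x n \<omega>)) \<partial>M) + (\<integral>\<^sup>+\<omega>. ennreal (dist (z \<omega>) (xl \<omega>)) \<partial>M)"
    by (rule nn_integral_add) measurable
  also have "\<dots> \<le> ennreal a + ennreal a"
  proof (intro add_mono dist_z)
    show "n0 \<le> n" using n n0 by linarith
    show "(\<integral>\<^sup>+\<omega>. ennreal (dist (z \<omega>) (xl \<omega>)) \<partial>M) \<le> ennreal a"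
      by (rule nn_integral_dist_le_of_AE_tendsto[OF _ lim dist_z]) measurable
  qed
  also have "\<dots> < ennreal \<epsilon>" using a by (simp flip: ennreal_plus add: ennreal_lessI)
  finally show ?thesis .
qed

end

theorem theorem4p8:
  fixes M :: "'b measure"
    and Fil :: "nat \<Rightarrow> 'b measure"
    and F :: "'a::polish_space \<Rightarrow> ennreal"
    and \<phi> :: "'a \<Rightarrow> 'a \<Rightarrow> real"
    and \<theta> :: "real \<Rightarrow> real"
    and x :: "nat \<Rightarrow> 'b \<Rightarrow> 'a"
    and \<zeta> \<xi> :: "nat \<Rightarrow> 'b \<Rightarrow> real"
    and K :: real
    and chi :: "real \<Rightarrow> nat"
    and \<Phi> :: "real \<Rightarrow> nat \<Rightarrow> real"
    and D :: "('b \<Rightarrow> 'a) set"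
    and \<tau> :: "real \<Rightarrow> real"
    and \<rho> :: "real \<Rightarrow> real"
  assumes prob: "prob_space M"
    and filt_sub: "\<And>n. subalgebra M (Fil n)"
    and filt_mono: "\<And>m n. m \<le> n \<Longrightarrow> sets (Fil m) \<subseteq> sets (Fil n)"
    and F_meas: "F \<in> borel_measurable borel"
    and zer_closed: "closed {z. F z = 0}"
    and zer_ne: "{z. F z = 0} \<noteq> {}"
    and phi_nonneg: "\<And>a b. \<phi> a b \<ge> 0"
    and phi_cont: "\<And>b. continuous_on UNIV (\<lambda>a. \<phi> a b)"
    and phi_meas: "\<And>a. (\<lambda>b. \<phi> a b) \<in> borel_measurable borel"
    and theta_nonneg: "\<And>e. e \<ge> 0 \<Longrightarrow> \<theta> e \<ge> 0"
    and theta_mono: "mono_on {0..} \<theta>"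
    and theta_convex: "convex_on {0..} \<theta>"
    and theta_0: "\<theta> 0 = 0"
    and theta_pos: "\<And>e. e > 0 \<Longrightarrow> \<theta> e > 0"
    and consistent: "\<And>e a b. e > 0 \<Longrightarrow> \<phi> a b < \<theta> e \<Longrightarrow> dist a b < e"
    and adapted: "\<And>n. x n \<in> measurable (Fil n) borel"
    and zeta_meas: "\<And>n. \<zeta> n \<in> borel_measurable (Fil n)"
    and zeta_nonneg: "\<And>n \<omega>. \<omega> \<in> space M \<Longrightarrow> \<zeta> n \<omega> \<ge> 0"
    and zeta_summable: "AE \<omega> in M. summable (\<lambda>n. \<zeta> n \<omega>)"
    and xi_meas: "\<And>n. \<xi> n \<in> borel_measurable (Fil n)"
    and xi_nonneg: "\<And>n \<omega>. \<omega> \<in> space M \<Longrightarrow> \<xi> n \<omega> \<ge> 0"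
    and xi_summable: "AE \<omega> in M. summable (\<lambda>n. \<xi> n \<omega>)"
    and fejer: "\<And>n z. z \<in> measurable (Fil n) borel \<Longrightarrow> (AE \<omega> in M. F (z \<omega>) = 0) \<Longrightarrow>
        (\<integral>\<^sup>+ \<omega>. ennreal (\<phi> (z \<omega>) (x n \<omega>)) \<partial>M) < \<infinity> \<Longrightarrow>
        AE \<omega> in M. nn_cond_exp M (Fil n) (\<lambda>\<omega>. ennreal (\<phi> (z \<omega>) (x (Suc n) \<omega>))) \<omega>
          \<le> ennreal ((1 + \<zeta> n \<omega>) * \<phi> (z \<omega>) (x n \<omega>) + \<xi> n \<omega>)"
    and K_pos: "K > 0"
    and K_bound: "AE \<omega> in M. (\<Prod>n. 1 + \<zeta> n \<omega>) < K"
    and chi: "\<And>e. e > 0 \<Longrightarrow> (\<Sum>n. \<integral>\<^sup>+ \<omega>. ennreal (\<xi> (n + chi e) \<omega>) \<partial>M) < ennreal e"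
    and Phi_pos: "\<And>e N. e > 0 \<Longrightarrow> \<Phi> e N > 0"
    and liminf_bound: "\<And>e N. e > 0 \<Longrightarrow>
        \<exists>n. N \<le> n \<and> real n \<le> \<Phi> e N \<and> (\<integral>\<^sup>+ \<omega>. F (x n \<omega>) \<partial>M) < ennreal e"
    and D_rv: "D \<subseteq> measurable M borel"
    and x_in_D: "\<And>n. x n \<in> D"
    and tau_pos: "\<And>e. e > 0 \<Longrightarrow> \<tau> e > 0"
    and tau_reg: "\<And>e y. e > 0 \<Longrightarrow> y \<in> D \<Longrightarrow> (\<integral>\<^sup>+ \<omega>. F (y \<omega>) \<partial>M) < ennreal (\<tau> e) \<Longrightarrow>
        (\<integral>\<^sup>+ \<omega>. ennreal (phi_dist \<phi> {z. F z = 0} (y \<omega>)) \<partial>M) < ennreal e"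
    and rho_def: "\<And>e. \<rho> e = \<Phi> (\<tau> (e / (3 * K))) (chi (e / (3 * K)))"
  shows "\<exists>xl \<in> measurable M borel. (\<forall>\<omega>\<in>space M. F (xl \<omega>) = 0) \<and>
     ((\<lambda>n. \<integral>\<^sup>+ \<omega>. ennreal (dist (x n \<omega>) (xl \<omega>)) \<partial>M) \<longlonglongrightarrow> 0) \<and>
     (AE \<omega> in M. (\<lambda>n. dist (x n \<omega>) (xl \<omega>)) \<longlonglongrightarrow> 0) \<and>
     (\<forall>e>0. \<forall>n. real n \<ge> \<rho> (\<theta> (e / 2)) \<longrightarrow>
        (\<integral>\<^sup>+ \<omega>. ennreal (dist (x n \<omega>) (xl \<omega>)) \<partial>M) < ennreal e) \<and>
     (\<forall>l>0. \<forall>e>0. measure M {\<omega> \<in> space M. \<exists>n. real n \<ge> \<rho> (l * \<theta> (e / 2)) \<and>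
        dist (x n \<omega>) (xl \<omega>) \<ge> e} < l)"
proof -
  interpret quasi_fejer_regular M Fil F \<phi> x \<zeta> \<xi> K \<theta> chi \<Phi> D \<tau>
    by (intro quasi_fejer_regular.intro stochastic_quasi_fejer.intro prob
        stochastic_quasi_fejer_axioms.intro quasi_fejer_regular_axioms.intro)
       (rule assms; assumption?)+
  have \<rho>: "\<rho> = rate" using rho_def by (simp add: fun_eq_iff rate_def)
  obtain xl where xl: "xl \<in> borel_measurable M" "\<And>\<omega>. xl \<omega> \<in> {z. F z = 0}"
    "AE \<omega> in M. (\<lambda>n. x n \<omega>) \<longlonglongrightarrow> xl \<omega>"
    using zer_ne measurable_limit_in_closed[OF measurable_Fil_M[OF adapted] zer_closed _
        AE_convergent_to_zero_set] by blast
  have mean_rate: "\<forall>e>0. \<forall>n. real n \<ge> \<rho> (\<theta> (e / 2)) \<longrightarrow>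
      (\<integral>\<^sup>+ \<omega>. ennreal (dist (x n \<omega>) (xl \<omega>)) \<partial>M) < ennreal e"
    using rate_in_mean[OF xl(1,3)] by (simp add: \<rho>)
  have "(\<lambda>n. \<integral>\<^sup>+ \<omega>. ennreal (dist (x n \<omega>) (xl \<omega>)) \<partial>M) \<longlonglongrightarrow> 0"
    using mean_rate by (intro ennreal_LIMSEQ_zero_of_rate[where r = "\<lambda>e. \<rho> (\<theta> (e / 2))"]) auto
  moreover have "AE \<omega> in M. (\<lambda>n. dist (x n \<omega>) (xl \<omega>)) \<longlonglongrightarrow> 0"
    using xl(3) by eventually_elim (simp add: tendsto_dist_iff[symmetric])
  moreover note rate_in_probability[OF xl(3)]
  ultimately show ?thesis
    using xl(1,2) mean_rate unfolding \<rho> by blast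
qed

end
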